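(* Let $\tau>0$, let $\Gamma^0$ be a closed polyhedral surface with $\boldsymbol X^0\in[\mathbb K^0]^3$ the identity and $\mathcal H^0\in\mathbb K^0$ given, and let $\alpha^m\ge0$ for all $m\ge0$. Suppose that for each $m\ge0$, $(\boldsymbol X^{m+1},V^{m+1},\beta_1^{m+1},\beta_2^{m+1},\mathcal H^{m+1})\in[\mathbb K^m]^3\times(\mathbb K^m)^4$ satisfies $$\Big(\tfrac{\boldsymbol X^{m+1}-\boldsymbol X^m}{\tau}\cdot\boldsymbol n^m,\phi^h\Big)^h_{\Gamma^m}=(V^{m+1},\phi^h)^h_{\Gamma^m}\quad\forall\phi^h\in\mathbb K^m,$$ $$\big((\boldsymbol X^{m+1}-\boldsymbol X^m)\cdot\boldsymbol\tau_i^m,\psi_i^h\big)^h_{\Gamma^m}=0,\quad i=1,2,\quad\forall\psi_1^h,\psi_2^h\in\mathbb K^m,$$ $$\Big(V^{m+1}\boldsymbol n^m+\alpha^m\sum_{i=1,2}\beta_i^{m+1}\boldsymbol\tau_i^m,\boldsymbol\omega^h\Big)^h_{\Gamma^m}=\Big\langle\mathcal H^{m+1}\mathbf A^m-\boldsymbol n^m(\nabla_\Gamma\mathcal H^{m+1})^T-\tfrac12(\mathcal H^{m+1})^2\nabla_\Gamma\boldsymbol X^{m+1},\nabla_\Gamma\boldsymbol\omega^h\Big\rangle^h_{\Gamma^m}\quad\forall\boldsymbol\omega^h\in[\mathbb K^m]^3,$$ $$(\mathcal H^{m+1}-\mathcal H^m,\varphi^h)^h_{\Gamma^m}=\big\langle\nabla_\Gamma(\boldsymbol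 X^{m+1}-\boldsymbol X^m),\boldsymbol n^m(\nabla_\Gamma\varphi^h)^T-\varphi^h\mathbf A^m\big\rangle^h_{\Gamma^m}\quad\forall\varphi^h\in\mathbb K^m,$$ and $\Gamma^{m+1}:=\boldsymbol X^{m+1}(\Gamma^m)$ is again a polyhedral surface with nondegenerate triangles. Then for every $\tau>0$ the discrete Willmore energy $W^m:=\frac12(\mathcal H^m,\mathcal H^m)^h_{\Gamma^m}$ satisfies $W^{m+1}\le W^m\le W^0$ for all $m\ge0$.
   Context: Polyhedral setting: $\Gamma^m=\bigcup_{j=1}^J\overline{\sigma_j^m}\subset\mathbb R^3$ is a closed polyhedral surface made of nonoverlapping nondegenerate triangles $\sigma_j^m$ with vertices $\boldsymbol q^m_{j_1},\boldsymbol q^m_{j_2},\boldsymbol q^m_{j_3}$, ordered so that $\mathcal J\{\sigma_j^m\}=(\boldsymbol q^m_{j_2}-\boldsymbol q^m_{j_1})\times(\boldsymbol q^m_{j_3}-\boldsymbol q^m_{j_1})$ points outward; $|\sigma_j^m|=\frac12|\mathcal J\{\sigma_j^m\}|$, and $\boldsymbol n^m|_{\sigma_j^m}=\mathcal J\{\sigma_j^m\}/|\mathcal J\{\sigma_j^m\}|$ (piecewise constant outward normal). Tangent fields: $\boldsymbol\tau_1^m|_{\sigma_j^m}=\frac{\boldsymbol q^m_{j_2}-\boldsymbol q^m_{j_1}}{|\boldsymbol q^m_{j_2}-\boldsymbol q^m_{j_1}|}$, $\boldsymbol\tau_2^m|_{\sigma_j^m}=\frac{\boldsymbol q^m_{j_3}-\boldsymbol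 q^m_{j_1}}{|\boldsymbol q^m_{j_3}-\boldsymbol q^m_{j_1}|}$. $\mathbb K^m$ is the space of continuous functions on $\Gamma^m$ that are affine on each triangle. $\boldsymbol X^m\in[\mathbb K^m]^3$ is the identity on $\Gamma^m$; $\boldsymbol X^{m+1}\in[\mathbb K^m]^3$ parameterizes $\Gamma^{m+1}$ with triangles $\sigma_j^{m+1}=\boldsymbol X^{m+1}(\sigma_j^m)$ (same connectivity), so functions in $\mathbb K^m$ and $\mathbb K^{m+1}$ are identified through their vertex values. Discrete surface gradient on $\Gamma^m$: for $g\in\mathbb K^m$, on a triangle $\sigma=\{\boldsymbol q_1,\boldsymbol q_2,\boldsymbol q_3\}$ with normal $\boldsymbol n$, $$\nabla_\Gamma g|_\sigma=\frac{g(\boldsymbol q_1)(\boldsymbol q_2-\boldsymbol q_3)\times\boldsymbol n+g(\boldsymbol q_2)(\boldsymbol q_3-\boldsymbol q_1)\times\boldsymbol n+g(\boldsymbol q_3)(\boldsymbol q_1-\boldsymbol q_2)\times\boldsymbol n}{|\mathcal J\{\sigma\}|};$$ for vector functions $\nabla_\Gamma\boldsymbol g$ is the matrix with $i$-th row $(\nabla_\Gamma g_i)^T$. $\mathbf A^m=\nabla_\Gamma\boldsymbol w^m$ where $\boldsymbol w^m\in[\mathbb K^m]^3$ is a given (vertex unit normal) field. Mass-lumped inner products: for scalar/vector functions $u,v$ continuous on each closed triangle, $$(u,v)^h_{\Gamma^m}=\tfrac13\sum_{j=1}^J\sum_{k=1}^3|\sigma_j^m|\,u((\boldsymbol q^m_{j_k})^-)\cdot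 v((\boldsymbol q^m_{j_k})^-),$$ and for matrix functions $\langle\boldsymbol U,\boldsymbol V\rangle^h_{\Gamma^m}=\tfrac13\sum_j\sum_k|\sigma_j^m|\,\boldsymbol U((\boldsymbol q^m_{j_k})^-):\boldsymbol V((\boldsymbol q^m_{j_k})^-)$, where $g((\boldsymbol q)^-)$ is the limit at vertex $\boldsymbol q$ from within $\sigma_j^m$ and $\boldsymbol U:\boldsymbol V=\mathrm{Tr}(\boldsymbol U^T\boldsymbol V)$. *)

theory Defs
  imports "HOL-Analysis.Analysis"
begin

(* Mesh data: vertices are indices 0..<NV, triangles are indices 0..<NT,
   T j k (k \<in> {0,1,2}) is the index of the k-th vertex of triangle j
   (k = 0,1,2 correspond to the paper's j_1, j_2, j_3).
   x :: nat \<Rightarrow> real^3 gives the vertex positions.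
   A function in K^m is given by its vertex values g :: nat \<Rightarrow> 'a.
   A piecewise (per-triangle) function evaluated at the vertices from within
   each triangle is represented as f :: nat \<Rightarrow> nat \<Rightarrow> 'a, f j k = value at
   vertex T j k from within triangle j. *)

definition Jac :: "(nat \<Rightarrow> real^3) \<Rightarrow> (nat \<Rightarrow> nat \<Rightarrow> nat) \<Rightarrow> nat \<Rightarrow> real^3" where
  "Jac x T j = cross3 (x (T j 1) - x (T j 0)) (x (T j 2) - x (T j 0))"

definition area :: "(nat \<Rightarrow> real^3) \<Rightarrow> (nat \<Rightarrow> nat \<Rightarrow> nat) \<Rightarrow> nat \<Rightarrow> real" where
  "area x T j = norm (Jac x T j) / 2"

definition nrm :: "(nat \<Rightarrow> real^3) \<Rightarrow> (nat \<Rightarrow> nat \<Rightarrow> nat) \<Rightarrow> nat \<Rightarrow> real^3" where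
  "nrm x T j = (1 / norm (Jac x T j)) *\<^sub>R Jac x T j"

definition tau1 :: "(nat \<Rightarrow> real^3) \<Rightarrow> (nat \<Rightarrow> nat \<Rightarrow> nat) \<Rightarrow> nat \<Rightarrow> real^3" where
  "tau1 x T j = (1 / norm (x (T j 1) - x (T j 0))) *\<^sub>R (x (T j 1) - x (T j 0))"

definition tau2 :: "(nat \<Rightarrow> real^3) \<Rightarrow> (nat \<Rightarrow> nat \<Rightarrow> nat) \<Rightarrow> nat \<Rightarrow> real^3" where
  "tau2 x T j = (1 / norm (x (T j 2) - x (T j 0))) *\<^sub>R (x (T j 2) - x (T j 0))"

definition gradS :: "(nat \<Rightarrow> real^3) \<Rightarrow> (nat \<Rightarrow> nat \<Rightarrow> nat) \<Rightarrow> nat \<Rightarrow> (nat \<Rightarrow> real) \<Rightarrow> real^3" where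
  "gradS x T j g =
     (1 / norm (Jac x T j)) *\<^sub>R
       (g (T j 0) *\<^sub>R cross3 (x (T j 1) - x (T j 2)) (nrm x T j)
      + g (T j 1) *\<^sub>R cross3 (x (T j 2) - x (T j 0)) (nrm x T j)
      + g (T j 2) *\<^sub>R cross3 (x (T j 0) - x (T j 1)) (nrm x T j))"

definition gradV :: "(nat \<Rightarrow> real^3) \<Rightarrow> (nat \<Rightarrow> nat \<Rightarrow> nat) \<Rightarrow> nat \<Rightarrow> (nat \<Rightarrow> real^3) \<Rightarrow> real^3^3" where
  "gradV x T j g = (\<chi> i. gradS x T j (\<lambda>v. g v $ i))"

definition outer :: "real^3 \<Rightarrow> real^3 \<Rightarrow> real^3^3" where
  "outer a b = (\<chi> i l. a $ i * b $ l)"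

definition frob :: "real^3^3 \<Rightarrow> real^3^3 \<Rightarrow> real" where
  "frob U V = (\<Sum>i\<in>UNIV. \<Sum>l\<in>UNIV. U $ i $ l * V $ i $ l)"

definition lump :: "(nat \<Rightarrow> real^3) \<Rightarrow> (nat \<Rightarrow> nat \<Rightarrow> nat) \<Rightarrow> nat \<Rightarrow> (nat \<Rightarrow> nat \<Rightarrow> real) \<Rightarrow> real" where
  "lump x T NT f = (1/3) * (\<Sum>j<NT. \<Sum>k<3. area x T j * f j k)"

definition ipS :: "(nat \<Rightarrow> real^3) \<Rightarrow> (nat \<Rightarrow> nat \<Rightarrow> nat) \<Rightarrow> nat \<Rightarrow> (nat \<Rightarrow> nat \<Rightarrow> real) \<Rightarrow> (nat \<Rightarrow> nat \<Rightarrow> real) \<Rightarrow> real" where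
  "ipS x T NT u v = lump x T NT (\<lambda>j k. u j k * v j k)"

definition ipV :: "(nat \<Rightarrow> real^3) \<Rightarrow> (nat \<Rightarrow> nat \<Rightarrow> nat) \<Rightarrow> nat \<Rightarrow> (nat \<Rightarrow> nat \<Rightarrow> real^3) \<Rightarrow> (nat \<Rightarrow> nat \<Rightarrow> real^3) \<Rightarrow> real" where
  "ipV x T NT u v = lump x T NT (\<lambda>j k. u j k \<bullet> v j k)"

definition ipM :: "(nat \<Rightarrow> real^3) \<Rightarrow> (nat \<Rightarrow> nat \<Rightarrow> nat) \<Rightarrow> nat \<Rightarrow> (nat \<Rightarrow> nat \<Rightarrow> real^3^3) \<Rightarrow> (nat \<Rightarrow> nat \<Rightarrow> real^3^3) \<Rightarrow> real" where
  "ipM x T NT U V = lump x T NT (\<lambda>j k. frob (U j k) (V j k))"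

definition vf :: "(nat \<Rightarrow> nat \<Rightarrow> nat) \<Rightarrow> (nat \<Rightarrow> 'a) \<Rightarrow> nat \<Rightarrow> nat \<Rightarrow> 'a" where
  "vf T g = (\<lambda>j k. g (T j k))"

definition tri_verts :: "(nat \<Rightarrow> nat \<Rightarrow> nat) \<Rightarrow> nat \<Rightarrow> nat set" where
  "tri_verts T j = {T j 0, T j 1, T j 2}"

definition has_edge :: "(nat \<Rightarrow> nat \<Rightarrow> nat) \<Rightarrow> nat \<Rightarrow> nat \<Rightarrow> nat \<Rightarrow> bool" where
  "has_edge T j a b = (\<exists>k<3. T j k = a \<and> T j ((k + 1) mod 3) = b)"

(* closed, coherently oriented polyhedral surface made of nonoverlapping
   nondegenerate triangles *)
definition poly_surface :: "nat \<Rightarrow> nat \<Rightarrow> (nat \<Rightarrow> nat \<Rightarrow> nat) \<Rightarrow> (nat \<Rightarrow> real^3) \<Rightarrow> bool" where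
  "poly_surface NV NT T x \<longleftrightarrow>
     0 < NT \<and>
     (\<forall>j<NT. \<forall>k<3. T j k < NV) \<and>
     (\<forall>v<NV. \<exists>j<NT. v \<in> tri_verts T j) \<and>
     inj_on x {..<NV} \<and>
     (\<forall>j<NT. Jac x T j \<noteq> 0) \<and>
     (\<forall>j<NT. \<forall>j'<NT. j \<noteq> j' \<longrightarrow> tri_verts T j \<noteq> tri_verts T j') \<and>
     (\<forall>j<NT. \<forall>j'<NT. j \<noteq> j' \<longrightarrow>
        convex hull (x ` tri_verts T j) \<inter> convex hull (x ` tri_verts T j')
          = convex hull (x ` (tri_verts T j \<inter> tri_verts T j'))) \<and>
     (\<forall>j<NT. \<forall>k<3.
        (\<exists>!j'. j' < NT \<and> has_edge T j' (T j k) (T j ((k + 1) mod 3))) \<and>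
        (\<exists>!j'. j' < NT \<and> has_edge T j' (T j ((k + 1) mod 3)) (T j k)))"

definition willmore :: "(nat \<Rightarrow> real^3) \<Rightarrow> (nat \<Rightarrow> nat \<Rightarrow> nat) \<Rightarrow> nat \<Rightarrow> (nat \<Rightarrow> real) \<Rightarrow> real" where
  "willmore x T NT H = 1/2 * ipS x T NT (vf T H) (vf T H)"

end

theory Submission
  imports Defs
begin

(* Test the curvature equation with H^{m+1}, the momentum equation with X^{m+1} - X^m, the
   normal-velocity equation with V^{m+1} and the tangential ones with \<beta>_i^{m+1}: the \<alpha>-terms
   vanish, the curvature terms cancel, and what remains is
     (H^{m+1} - H^m, H^{m+1}) + \<tau> (V^{m+1}, V^{m+1})
       = - < (H^{m+1})^2/2 \<nabla>X^{m+1}, \<nabla>(X^{m+1} - X^m) >.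
   On each triangle |\<sigma>^m| \<nabla>X^{m+1} : \<nabla>(X^{m+1} - X^m) \<ge> |\<sigma>^{m+1}| - |\<sigma>^m| (polarize, then
   AM-GM), so the right-hand side is at most the lumped (H^{m+1})^2/2 on \<Gamma>^m minus that on
   \<Gamma>^{m+1}; with (a - b) a \<ge> (a^2 - b^2)/2 this gives W^{m+1} \<le> W^m. *)

lemma inner_cross3_cross3:
  "cross3 a b \<bullet> cross3 c d = (a \<bullet> c) * (b \<bullet> d) - (a \<bullet> d) * (b \<bullet> c)"
  by (simp add: cross3_simps)

lemma norm_cross3_sq: "(norm (cross3 a b))\<^sup>2 = (a \<bullet> a) * (b \<bullet> b) - (a \<bullet> b)\<^sup>2"
  unfolding power2_norm_eq_inner inner_cross3_cross3 by (simp add: power2_eq_square inner_commute)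

lemma norm_cross3_le: "norm (cross3 a b) \<le> norm a * norm b"
proof -
  have "(norm (cross3 a b))\<^sup>2 \<le> (norm a * norm b)\<^sup>2"
    using norm_cross_dot[of a b] by (metis le_add_same_cancel1 zero_le_power2)
  then show ?thesis by (simp add: power_mono_iff)
qed

text \<open>If \<open>e1, e2\<close> are the edges of a triangle and \<open>d, f\<close> the edge increments of two
  piecewise linear functions, this is \<open>|e1 \<times> e2|\<^sup>2\<close> times the inner product of their surface
  gradients (see \<open>frob_gradV_gradV\<close>).\<close>

definition gram_pairing :: "'a::real_inner \<Rightarrow> 'a \<Rightarrow> 'b::real_inner \<Rightarrow> 'b \<Rightarrow> 'b \<Rightarrow> 'b \<Rightarrow> real" where
  "gram_pairing e1 e2 d1 d2 f1 f2 =
     (d1 \<bullet> f1) * (e2 \<bullet> e2) - (d1 \<bullet> f2 + d2 \<bullet> f1) * (e1 \<bullet> e2) + (d2 \<bullet> f2) * (e1 \<bullet> e1)"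

lemma gram_pairing_polar:
  "gram_pairing e1 e2 d1 d2 (d1 - e1) (d2 - e2) =
     (gram_pairing e1 e2 d1 d2 d1 d2 - gram_pairing e1 e2 e1 e2 e1 e2
      + gram_pairing e1 e2 (d1 - e1) (d2 - e2) (d1 - e1) (d2 - e2)) / 2"
  unfolding gram_pairing_def inner_diff_left inner_diff_right
    inner_commute[of d1 e1] inner_commute[of d2 e2] inner_commute[of d1 e2]
    inner_commute[of d2 e1] inner_commute[of d2 d1] inner_commute[of e2 e1]
  by (simp add: field_simps)

lemma gram_pairing_self: "gram_pairing e1 e2 e1 e2 e1 e2 = 2 * (norm (cross3 e1 e2))\<^sup>2"
  unfolding norm_cross3_sq gram_pairing_def
  by (simp add: power2_eq_square inner_commute[of e2 e1] algebra_simps)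

lemma cross3_norm_mult_le_gram_pairing:
  fixes e1 e2 d1 d2 :: "real^3"
  shows "2 * norm (cross3 e1 e2) * norm (cross3 d1 d2) \<le> gram_pairing e1 e2 d1 d2 d1 d2"
proof (cases "e1 = 0")
  case True
  then show ?thesis by (simp add: gram_pairing_def)
next
  case False
  define a where "a = e1 \<bullet> e1"
  define h where "h = a *\<^sub>R d2 - (e1 \<bullet> e2) *\<^sub>R d1"
  define J where "J = norm (cross3 e1 e2)"
  have a_pos: "a > 0" using False by (simp add: a_def)
  \<comment> \<open>completing the square in the direction of \<open>d1\<close>\<close>
  have square: "a * gram_pairing e1 e2 d1 d2 d1 d2 = h \<bullet> h + (d1 \<bullet> d1) * J\<^sup>2"
    unfolding J_def norm_cross3_sq
    by (simp add: h_def a_def gram_pairing_def inner_diff_left inner_diff_right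
        power2_eq_square inner_commute algebra_simps)
  have "a * norm (cross3 d1 d2) = norm (cross3 d1 h)"
    using a_pos by (simp add: h_def Cross3.right_diff_distrib cross_mult_right)
  also have "\<dots> \<le> norm d1 * norm h" by (rule norm_cross3_le)
  finally have bound: "a * norm (cross3 d1 d2) \<le> norm d1 * norm h" .
  have "a * (2 * J * norm (cross3 d1 d2)) = 2 * J * (a * norm (cross3 d1 d2))"
    by (simp add: ac_simps)
  also have "\<dots> \<le> 2 * J * (norm d1 * norm h)"
    using bound by (simp add: J_def mult_left_mono)
  also have "\<dots> \<le> (J * norm d1)\<^sup>2 + (norm h)\<^sup>2"
    using sum_squares_bound[of "J * norm d1" "norm h"] by (simp add: ac_simps)
  also have "\<dots> = a * gram_pairing e1 e2 d1 d2 d1 d2"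
    by (simp add: square power_mult_distrib power2_norm_eq_inner algebra_simps)
  finally show ?thesis using a_pos by (simp add: J_def mult.assoc)
qed

definition tri_edge :: "(nat \<Rightarrow> 'a::ab_group_add) \<Rightarrow> (nat \<Rightarrow> nat \<Rightarrow> nat) \<Rightarrow> nat \<Rightarrow> nat \<Rightarrow> 'a" where
  "tri_edge g T j k = g (T j k) - g (T j 0)"

lemma tri_edge_diff: "tri_edge (\<lambda>v. f v - g v) T j k = tri_edge f T j k - tri_edge g T j k"
  by (simp add: tri_edge_def)

lemma Jac_tri_edge: "Jac x T j = cross3 (tri_edge x T j 1) (tri_edge x T j 2)"
  by (simp add: Jac_def tri_edge_def)

lemma nrm_orthonormal:
  assumes "Jac x T j \<noteq> 0"
  shows "nrm x T j \<bullet> nrm x T j = 1"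
    and "tri_edge x T j 1 \<bullet> nrm x T j = 0"
    and "tri_edge x T j 2 \<bullet> nrm x T j = 0"
  using assms
  by (auto simp: nrm_def Jac_tri_edge dot_cross_self inner_commute power2_eq_square
      power2_norm_eq_inner[symmetric])

lemma gradS_tri_edge:
  "gradS x T j g = (1 / norm (Jac x T j)) *\<^sub>R
     (tri_edge g T j 1 *\<^sub>R cross3 (tri_edge x T j 2) (nrm x T j)
      - tri_edge g T j 2 *\<^sub>R cross3 (tri_edge x T j 1) (nrm x T j))"
  unfolding gradS_def tri_edge_def by (simp add: Cross3.left_diff_distrib algebra_simps)

lemma inner_gradS_gradS:
  assumes "Jac x T j \<noteq> 0"
  shows "(gradS x T j g \<bullet> gradS x T j h) * (norm (Jac x T j))\<^sup>2 =
    gram_pairing (tri_edge x T j 1) (tri_edge x T j 2)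
      (tri_edge g T j 1) (tri_edge g T j 2) (tri_edge h T j 1) (tri_edge h T j 2)"
proof -
  define e1 e2 n where "e1 = tri_edge x T j 1" and "e2 = tri_edge x T j 2" and "n = nrm x T j"
  define c where "c = 1 / norm (Jac x T j)"
  have "n \<bullet> n = 1" "e1 \<bullet> n = 0" "e2 \<bullet> n = 0"
    using nrm_orthonormal[OF assms] by (simp_all add: e1_def e2_def n_def)
  then have "cross3 e1 n \<bullet> cross3 e1 n = e1 \<bullet> e1" "cross3 e2 n \<bullet> cross3 e2 n = e2 \<bullet> e2"
    "cross3 e1 n \<bullet> cross3 e2 n = e1 \<bullet> e2" "cross3 e2 n \<bullet> cross3 e1 n = e1 \<bullet> e2"
    by (simp_all add: inner_cross3_cross3 inner_commute)
  then have "gradS x T j g \<bullet> gradS x T j h = c\<^sup>2 *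
      gram_pairing e1 e2 (tri_edge g T j 1) (tri_edge g T j 2) (tri_edge h T j 1) (tri_edge h T j 2)"
    unfolding gradS_tri_edge e1_def[symmetric] e2_def[symmetric] n_def[symmetric] c_def[symmetric]
      inner_diff_left inner_diff_right inner_scaleR_left inner_scaleR_right
    by (simp add: gram_pairing_def algebra_simps power2_eq_square)
  moreover have "c\<^sup>2 * (norm (Jac x T j))\<^sup>2 = 1"
    using assms by (simp add: c_def power_divide)
  ultimately show ?thesis by (simp add: e1_def e2_def)
qed

lemma frob_eq_inner: "frob U V = U \<bullet> V"
  by (simp add: frob_def inner_vec_def)

lemma gram_pairing_vec:
  fixes d1 d2 f1 f2 :: "real^'n"
  shows "gram_pairing e1 e2 d1 d2 f1 f2 =
    (\<Sum>i\<in>UNIV. gram_pairing e1 e2 (d1 $ i) (d2 $ i) (f1 $ i) (f2 $ i))"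
  unfolding gram_pairing_def inner_vec_def[of d1] inner_vec_def[of d2] inner_real_def
  by (simp add: sum_subtractf sum.distrib sum_distrib_right distrib_right)

lemma tri_edge_component: "tri_edge (\<lambda>v. g v $ i) T j k = tri_edge g T j k $ i"
  by (simp add: tri_edge_def)

lemma frob_gradV_gradV:
  assumes "Jac x T j \<noteq> 0"
  shows "frob (gradV x T j g) (gradV x T j h) * (norm (Jac x T j))\<^sup>2 =
    gram_pairing (tri_edge x T j 1) (tri_edge x T j 2)
      (tri_edge g T j 1) (tri_edge g T j 2) (tri_edge h T j 1) (tri_edge h T j 2)"
proof -
  have "frob (gradV x T j g) (gradV x T j h) * (norm (Jac x T j))\<^sup>2 =
      (\<Sum>i\<in>UNIV. (gradS x T j (\<lambda>v. g v $ i) \<bullet> gradS x T j (\<lambda>v. h v $ i)) * (norm (Jac x T j))\<^sup>2)"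
    by (simp add: frob_def gradV_def inner_vec_def sum_distrib_right)
  also have "\<dots> = (\<Sum>i\<in>UNIV. gram_pairing (tri_edge x T j 1) (tri_edge x T j 2)
      (tri_edge g T j 1 $ i) (tri_edge g T j 2 $ i) (tri_edge h T j 1 $ i) (tri_edge h T j 2 $ i))"
    by (simp only: inner_gradS_gradS[OF assms] tri_edge_component)
  finally show ?thesis by (simp only: gram_pairing_vec)
qed

lemma area_diff_le_frob_gradV:
  assumes "Jac x T j \<noteq> 0"
  shows "area y T j - area x T j
    \<le> area x T j * frob (gradV x T j y) (gradV x T j (\<lambda>v. y v - x v))"
proof -
  define e1 e2 p1 p2 where "e1 = tri_edge x T j 1" and "e2 = tri_edge x T j 2"
    and "p1 = tri_edge y T j 1" and "p2 = tri_edge y T j 2"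
  define J J' F where "J = norm (Jac x T j)" and "J' = norm (Jac y T j)"
    and "F = frob (gradV x T j y) (gradV x T j (\<lambda>v. y v - x v))"
  have "J > 0" using assms by (simp add: J_def)
  have "F * J\<^sup>2 = gram_pairing e1 e2 p1 p2 (p1 - e1) (p2 - e2)"
    using frob_gradV_gradV[OF assms] by (simp add: F_def J_def e1_def e2_def p1_def p2_def tri_edge_diff)
  also have "\<dots> = (gram_pairing e1 e2 p1 p2 p1 p2 - 2 * J\<^sup>2
      + gram_pairing e1 e2 (p1 - e1) (p2 - e2) (p1 - e1) (p2 - e2)) / 2"
    by (simp add: gram_pairing_polar gram_pairing_self J_def Jac_tri_edge e1_def e2_def)
  also have "\<dots> \<ge> J * J' - J\<^sup>2"
  proof -
    have "2 * J * J' \<le> gram_pairing e1 e2 p1 p2 p1 p2"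
      using cross3_norm_mult_le_gram_pairing[of e1 e2 p1 p2]
      by (simp add: J_def J'_def Jac_tri_edge e1_def e2_def p1_def p2_def)
    moreover have "0 \<le> gram_pairing e1 e2 (p1 - e1) (p2 - e2) (p1 - e1) (p2 - e2)"
      using cross3_norm_mult_le_gram_pairing[of e1 e2 "p1 - e1" "p2 - e2"]
      by (smt (verit) mult_nonneg_nonneg norm_ge_zero)
    ultimately show ?thesis by simp
  qed
  finally have "J * (J' - J) \<le> J * (F * J)"
    by (simp add: power2_eq_square algebra_simps)
  then have "J' - J \<le> F * J" using \<open>J > 0\<close> by simp
  then show ?thesis by (simp add: area_def J_def J'_def F_def algebra_simps)
qed

lemma area_nonneg: "0 \<le> area x T j"
  by (simp add: area_def)

lemma lump_add: "lump x T NT (\<lambda>j k. f j k + g j k) = lump x T NT f + lump x T NT g"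
  by (simp add: lump_def sum.distrib algebra_simps)

lemma lump_diff: "lump x T NT (\<lambda>j k. f j k - g j k) = lump x T NT f - lump x T NT g"
  by (simp add: lump_def sum_subtractf algebra_simps)

lemma lump_cmult: "lump x T NT (\<lambda>j k. c * f j k) = c * lump x T NT f"
  by (simp add: lump_def sum_distrib_left algebra_simps)

lemma lump_cong:
  "(\<And>j k. j < NT \<Longrightarrow> k < 3 \<Longrightarrow> f j k = g j k) \<Longrightarrow> lump x T NT f = lump x T NT g"
  by (simp add: lump_def)

lemma lump_mono:
  "(\<And>j k. j < NT \<Longrightarrow> k < 3 \<Longrightarrow> f j k \<le> g j k) \<Longrightarrow> lump x T NT f \<le> lump x T NT g"
  unfolding lump_def by (intro mult_left_mono sum_mono) (auto intro: mult_left_mono area_nonneg)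

lemma lump_nonneg: "(\<And>j k. j < NT \<Longrightarrow> k < 3 \<Longrightarrow> 0 \<le> f j k) \<Longrightarrow> 0 \<le> lump x T NT f"
  using lump_mono[of NT "\<lambda>_ _. 0" f x T] by (simp add: lump_def)

lemma willmore_eq_lump: "willmore x T NT H = lump x T NT (\<lambda>j k. 1/2 * (H (T j k))\<^sup>2)"
  using lump_cmult[of x T NT "1/2" "\<lambda>j k. H (T j k) * H (T j k)"]
  by (simp add: willmore_def ipS_def vf_def power2_eq_square)

lemma lump_area_diff_le:
  assumes "\<forall>j<NT. Jac x T j \<noteq> 0" and "\<And>j k. 0 \<le> c j k"
  shows "lump y T NT c - lump x T NT c
    \<le> lump x T NT (\<lambda>j k. c j k * frob (gradV x T j y) (gradV x T j (\<lambda>v. y v - x v)))"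
proof -
  have "(area y T j - area x T j) * c j k
      \<le> area x T j * (c j k * frob (gradV x T j y) (gradV x T j (\<lambda>v. y v - x v)))"
    if "j < NT" for j k
    using mult_right_mono[OF area_diff_le_frob_gradV[of x T j y] assms(2)] assms(1) that
    by (simp add: algebra_simps)
  then have "(\<Sum>j<NT. \<Sum>k<3. (area y T j - area x T j) * c j k)
      \<le> (\<Sum>j<NT. \<Sum>k<3. area x T j * (c j k * frob (gradV x T j y) (gradV x T j (\<lambda>v. y v - x v))))"
    by (intro sum_mono) auto
  then show ?thesis
    unfolding lump_def left_diff_distrib sum_subtractf by linarith
qed

lemma willmore_step_decrease:
  fixes x y w :: "nat \<Rightarrow> real^3" and H H' V \<beta>1 \<beta>2 :: "nat \<Rightarrow> real" and \<alpha> \<tau> :: real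
  assumes "\<tau> > 0"
    and nondegenerate: "\<forall>j<NT. Jac x T j \<noteq> 0"
    and normal: "ipS x T NT (\<lambda>j k. ((1 / \<tau>) *\<^sub>R (y (T j k) - x (T j k))) \<bullet> nrm x T j) (vf T V)
        = ipS x T NT (vf T V) (vf T V)"
    and tangential1: "ipS x T NT (\<lambda>j k. (y (T j k) - x (T j k)) \<bullet> tau1 x T j) (vf T \<beta>1) = 0"
    and tangential2: "ipS x T NT (\<lambda>j k. (y (T j k) - x (T j k)) \<bullet> tau2 x T j) (vf T \<beta>2) = 0"
    and motion: "ipV x T NT (\<lambda>j k. V (T j k) *\<^sub>R nrm x T j
          + \<alpha> *\<^sub>R (\<beta>1 (T j k) *\<^sub>R tau1 x T j + \<beta>2 (T j k) *\<^sub>R tau2 x T j))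
          (vf T (\<lambda>v. y v - x v))
        = ipM x T NT (\<lambda>j k. H' (T j k) *\<^sub>R gradV x T j w - outer (nrm x T j) (gradS x T j H')
          - (1/2 * (H' (T j k))\<^sup>2) *\<^sub>R gradV x T j y) (\<lambda>j k. gradV x T j (\<lambda>v. y v - x v))"
    and curvature: "ipS x T NT (vf T (\<lambda>v. H' v - H v)) (vf T H')
        = ipM x T NT (\<lambda>j k. gradV x T j (\<lambda>v. y v - x v))
          (\<lambda>j k. outer (nrm x T j) (gradS x T j H') - H' (T j k) *\<^sub>R gradV x T j w)"
  shows "willmore y T NT H' \<le> willmore x T NT H"
proof -
  define d where "d j k = y (T j k) - x (T j k)" for j k
  define G where "G j = frob (gradV x T j y) (gradV x T j (\<lambda>v. y v - x v))" for j
  have "1 / \<tau> * lump x T NT (\<lambda>j k. V (T j k) * (d j k \<bullet> nrm x T j))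
      = ipS x T NT (\<lambda>j k. ((1 / \<tau>) *\<^sub>R (y (T j k) - x (T j k))) \<bullet> nrm x T j) (vf T V)"
    unfolding ipS_def vf_def lump_cmult[symmetric] by (rule lump_cong) (simp add: d_def)
  then have "lump x T NT (\<lambda>j k. V (T j k) * (d j k \<bullet> nrm x T j)) = \<tau> * ipS x T NT (vf T V) (vf T V)"
    using normal \<open>\<tau> > 0\<close> by (simp add: field_simps)
  moreover have "lump x T NT (\<lambda>j k. \<beta>1 (T j k) * (d j k \<bullet> tau1 x T j)) = 0"
    and "lump x T NT (\<lambda>j k. \<beta>2 (T j k) * (d j k \<bullet> tau2 x T j)) = 0"
    using tangential1 tangential2 by (simp_all add: ipS_def vf_def d_def mult.commute)
  moreover have "ipV x T NT (\<lambda>j k. V (T j k) *\<^sub>R nrm x T j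
          + \<alpha> *\<^sub>R (\<beta>1 (T j k) *\<^sub>R tau1 x T j + \<beta>2 (T j k) *\<^sub>R tau2 x T j))
          (vf T (\<lambda>v. y v - x v))
      = lump x T NT (\<lambda>j k. V (T j k) * (d j k \<bullet> nrm x T j)
          + (\<alpha> * (\<beta>1 (T j k) * (d j k \<bullet> tau1 x T j)) + \<alpha> * (\<beta>2 (T j k) * (d j k \<bullet> tau2 x T j))))"
    unfolding ipV_def vf_def
    by (rule lump_cong) (simp add: d_def inner_add_left inner_commute algebra_simps)
  ultimately have work: "ipV x T NT (\<lambda>j k. V (T j k) *\<^sub>R nrm x T j
          + \<alpha> *\<^sub>R (\<beta>1 (T j k) *\<^sub>R tau1 x T j + \<beta>2 (T j k) *\<^sub>R tau2 x T j))
          (vf T (\<lambda>v. y v - x v)) = \<tau> * ipS x T NT (vf T V) (vf T V)"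
    by (simp add: lump_add lump_cmult)
  have cancel: "ipS x T NT (vf T (\<lambda>v. H' v - H v)) (vf T H') + \<tau> * ipS x T NT (vf T V) (vf T V)
      = - lump x T NT (\<lambda>j k. 1/2 * (H' (T j k))\<^sup>2 * G j)"
    unfolding work[symmetric] motion curvature ipM_def lump_add[symmetric]
      lump_cmult[of x T NT "-1", simplified, symmetric]
    by (rule lump_cong) (simp add: G_def frob_eq_inner inner_diff_left inner_diff_right
        inner_commute[of "gradV x T _ (\<lambda>v. y v - x v)"] algebra_simps)
  have "willmore y T NT H' - lump x T NT (\<lambda>j k. 1/2 * (H' (T j k))\<^sup>2)
      \<le> lump x T NT (\<lambda>j k. 1/2 * (H' (T j k))\<^sup>2 * G j)"
    unfolding willmore_eq_lump G_def by (rule lump_area_diff_le[OF nondegenerate]) simp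
  moreover have "lump x T NT (\<lambda>j k. 1/2 * (H' (T j k))\<^sup>2) - willmore x T NT H
      \<le> ipS x T NT (vf T (\<lambda>v. H' v - H v)) (vf T H')"
  proof -
    have "1/2 * a\<^sup>2 - 1/2 * b\<^sup>2 \<le> (a - b) * a" for a b :: real
      using zero_le_power2[of "a - b"] by (simp add: power2_eq_square algebra_simps)
    then show ?thesis
      unfolding willmore_eq_lump ipS_def vf_def lump_diff[symmetric] by (rule lump_mono)
  qed
  moreover have "0 \<le> ipS x T NT (vf T V) (vf T V)"
    unfolding ipS_def by (rule lump_nonneg) simp
  ultimately show ?thesis
    using cancel \<open>\<tau> > 0\<close> by (smt (verit) mult_nonneg_nonneg)
qed

theorem theorem5p1:
  fixes NV NT :: nat and T :: "nat \<Rightarrow> nat \<Rightarrow> nat"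
    and \<tau> :: real and \<alpha> :: "nat \<Rightarrow> real"
    and X :: "nat \<Rightarrow> nat \<Rightarrow> real^3"
    and V \<beta>1 \<beta>2 H :: "nat \<Rightarrow> nat \<Rightarrow> real"
    and w :: "nat \<Rightarrow> nat \<Rightarrow> real^3"
  assumes tau_pos: "\<tau> > 0"
    and alpha_nonneg: "\<forall>m. \<alpha> m \<ge> 0"
    and surf: "\<forall>m. poly_surface NV NT T (X m)"
    and w_unit: "\<forall>m. \<forall>v<NV. norm (w m v) = 1"
    and eq1: "\<forall>m. \<forall>\<phi> :: nat \<Rightarrow> real.
       ipS (X m) T NT
         (\<lambda>j k. ((1 / \<tau>) *\<^sub>R (X (Suc m) (T j k) - X m (T j k))) \<bullet> nrm (X m) T j)
         (vf T \<phi>)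
       = ipS (X m) T NT (vf T (V (Suc m))) (vf T \<phi>)"
    and eq2a: "\<forall>m. \<forall>\<psi> :: nat \<Rightarrow> real.
       ipS (X m) T NT
         (\<lambda>j k. (X (Suc m) (T j k) - X m (T j k)) \<bullet> tau1 (X m) T j)
         (vf T \<psi>) = 0"
    and eq2b: "\<forall>m. \<forall>\<psi> :: nat \<Rightarrow> real.
       ipS (X m) T NT
         (\<lambda>j k. (X (Suc m) (T j k) - X m (T j k)) \<bullet> tau2 (X m) T j)
         (vf T \<psi>) = 0"
    and eq3: "\<forall>m. \<forall>\<omega> :: nat \<Rightarrow> real^3.
       ipV (X m) T NT
         (\<lambda>j k. V (Suc m) (T j k) *\<^sub>R nrm (X m) T j
            + \<alpha> m *\<^sub>R (\<beta>1 (Suc m) (T j k) *\<^sub>R tau1 (X m) T j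
                         + \<beta>2 (Suc m) (T j k) *\<^sub>R tau2 (X m) T j))
         (vf T \<omega>)
       = ipM (X m) T NT
         (\<lambda>j k. H (Suc m) (T j k) *\<^sub>R gradV (X m) T j (w m)
            - outer (nrm (X m) T j) (gradS (X m) T j (H (Suc m)))
            - (1/2 * (H (Suc m) (T j k))\<^sup>2) *\<^sub>R gradV (X m) T j (X (Suc m)))
         (\<lambda>j k. gradV (X m) T j \<omega>)"
    and eq4: "\<forall>m. \<forall>\<phi> :: nat \<Rightarrow> real.
       ipS (X m) T NT (vf T (\<lambda>v. H (Suc m) v - H m v)) (vf T \<phi>)
       = ipM (X m) T NT
         (\<lambda>j k. gradV (X m) T j (\<lambda>v. X (Suc m) v - X m v))
         (\<lambda>j k. outer (nrm (X m) T j) (gradS (X m) T j \<phi>)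
                 - \<phi> (T j k) *\<^sub>R gradV (X m) T j (w m))"
  shows "\<forall>m. willmore (X (Suc m)) T NT (H (Suc m)) \<le> willmore (X m) T NT (H m)
           \<and> willmore (X m) T NT (H m) \<le> willmore (X 0) T NT (H 0)"
proof -
  have step: "willmore (X (Suc m)) T NT (H (Suc m)) \<le> willmore (X m) T NT (H m)" for m
  proof (rule willmore_step_decrease[OF tau_pos])
    show "\<forall>j<NT. Jac (X m) T j \<noteq> 0"
      using surf by (simp add: poly_surface_def)
  qed (fact eq1[rule_format] eq2a[rule_format] eq2b[rule_format] eq3[rule_format] eq4[rule_format])+
  then have "decseq (\<lambda>m. willmore (X m) T NT (H m))"
    by (rule decseq_SucI)
  then show ?thesis
    using step by (simp add: decseq_def)
qed

end
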